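(* Let $G$ be a connected simple graph with at least $3$ vertices and let $v\in V(G)$ be a vertex that is not a cut vertex of $G$. Then $$\chi_{dom}(G)-1\leq \chi_{dom}(G-v)\leq \chi_{dom}(G)+\deg v-1.$$
   Context: All graphs are finite and simple. A dominated coloring (dom-coloring) of a graph $H$ is a proper vertex coloring of $H$ such that for every color class $C$ there is a vertex $x\in V(H)$ adjacent to every vertex of $C$ (i.e. $C\subseteq N_H(x)$). The dominated chromatic number $\chi_{dom}(H)$ is the minimum number of colors in a dominated coloring of $H$. $G-v$ denotes the graph obtained from $G$ by deleting $v$ and all edges incident with $v$; $\deg v$ is the degree of $v$ in $G$. *)

theory Defs
  imports Main
begin

definition sgraph :: "'a set \<Rightarrow> ('a \<Rightarrow> 'a \<Rightarrow> bool) \<Rightarrow> bool" where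
  "sgraph V E \<longleftrightarrow> finite V \<and> (\<forall>x y. E x y \<longrightarrow> x \<in> V \<and> y \<in> V)
     \<and> (\<forall>x y. E x y \<longrightarrow> E y x) \<and> (\<forall>x. \<not> E x x)"

definition nbhd :: "('a \<Rightarrow> 'a \<Rightarrow> bool) \<Rightarrow> 'a \<Rightarrow> 'a set" where
  "nbhd E x = {y. E x y}"

definition degree :: "('a \<Rightarrow> 'a \<Rightarrow> bool) \<Rightarrow> 'a \<Rightarrow> nat" where
  "degree E x = card (nbhd E x)"

definition del_vertex_V :: "'a set \<Rightarrow> 'a \<Rightarrow> 'a set" where
  "del_vertex_V V v = V - {v}"

definition del_vertex_E :: "('a \<Rightarrow> 'a \<Rightarrow> bool) \<Rightarrow> 'a \<Rightarrow> 'a \<Rightarrow> 'a \<Rightarrow> bool" where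
  "del_vertex_E E v = (\<lambda>x y. E x y \<and> x \<noteq> v \<and> y \<noteq> v)"

definition reach :: "('a \<Rightarrow> 'a \<Rightarrow> bool) \<Rightarrow> 'a \<Rightarrow> 'a \<Rightarrow> bool" where
  "reach E = E\<^sup>*\<^sup>*"

definition components :: "'a set \<Rightarrow> ('a \<Rightarrow> 'a \<Rightarrow> bool) \<Rightarrow> 'a set set" where
  "components V E = {{y \<in> V. reach E x y} | x. x \<in> V}"

definition connected_graph :: "'a set \<Rightarrow> ('a \<Rightarrow> 'a \<Rightarrow> bool) \<Rightarrow> bool" where
  "connected_graph V E \<longleftrightarrow> V \<noteq> {} \<and> (\<forall>x\<in>V. \<forall>y\<in>V. reach E x y)"

definition cut_vertex :: "'a set \<Rightarrow> ('a \<Rightarrow> 'a \<Rightarrow> bool) \<Rightarrow> 'a \<Rightarrow> bool" where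
  "cut_vertex V E v \<longleftrightarrow> v \<in> V \<and>
     card (components (del_vertex_V V v) (del_vertex_E E v)) > card (components V E)"

definition dom_coloring :: "'a set \<Rightarrow> ('a \<Rightarrow> 'a \<Rightarrow> bool) \<Rightarrow> ('a \<Rightarrow> nat) \<Rightarrow> nat \<Rightarrow> bool" where
  "dom_coloring V E c k \<longleftrightarrow>
     c ` V = {..<k}
     \<and> (\<forall>x\<in>V. \<forall>y\<in>V. E x y \<longrightarrow> c x \<noteq> c y)
     \<and> (\<forall>i<k. \<exists>x\<in>V. {y \<in> V. c y = i} \<subseteq> nbhd E x)"

definition chi_dom :: "'a set \<Rightarrow> ('a \<Rightarrow> 'a \<Rightarrow> bool) \<Rightarrow> nat" where
  "chi_dom V E = (LEAST k. \<exists>c. dom_coloring V E c k)"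

end

theory Submission
  imports Defs
begin

text \<open>Colouring v with a fresh colour extends a dominated colouring of G - v to one of G,
the class {v} being dominated by any neighbour of v. Conversely, in a dominated colouring of G
with k colours, every class that is dominated in G - v stays a class; a class dominated only by v
lies in N(v) and is split into singletons, each dominated because the connected graph G - v on at
least two vertices has no isolated vertex. This uses at most k - 1 + deg v colours if some class
is split, and at most k otherwise, while deg v \<ge> 1.\<close>

lemma dom_coloring_card_image:
  fixes c :: "'a \<Rightarrow> 'b"
  assumes "finite V"
    and proper: "\<forall>x\<in>V. \<forall>y\<in>V. E x y \<longrightarrow> c x \<noteq> c y"
    and dominated: "\<forall>u\<in>V. \<exists>x\<in>V. {y\<in>V. c y = c u} \<subseteq> nbhd E x"
  shows "\<exists>c'. dom_coloring V E c' (card (c ` V))"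
proof -
  obtain h where h: "bij_betw h (c ` V) {0..<card (c ` V)}"
    using ex_bij_betw_finite_nat finite_imageI[OF \<open>finite V\<close>] by blast
  have inj: "inj_on h (c ` V)"
    using h by (simp add: bij_betw_def)
  have img: "(h \<circ> c) ` V = {..<card (c ` V)}"
    using h by (simp add: bij_betw_def image_comp atLeast0LessThan)
  have "\<forall>x\<in>V. \<forall>y\<in>V. E x y \<longrightarrow> (h \<circ> c) x \<noteq> (h \<circ> c) y"
    using proper inj by (auto dest: inj_onD)
  moreover have "\<exists>x\<in>V. {y \<in> V. (h \<circ> c) y = i} \<subseteq> nbhd E x" if "i < card (c ` V)" for i
  proof -
    have "i \<in> (h \<circ> c) ` V" using that img by simp
    then obtain u where u: "u \<in> V" "i = h (c u)" by auto
    then have "{y \<in> V. (h \<circ> c) y = i} = {y\<in>V. c y = c u}"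
      using inj by (auto dest: inj_onD)
    then show ?thesis using dominated u by auto
  qed
  ultimately show ?thesis using img unfolding dom_coloring_def by blast
qed

lemma chi_dom_le: "dom_coloring V E c k \<Longrightarrow> chi_dom V E \<le> k"
  unfolding chi_dom_def by (rule Least_le) blast

lemma dom_coloring_chi_dom:
  assumes "sgraph V E" and "\<forall>u\<in>V. \<exists>w\<in>V. E w u"
  shows "\<exists>c. dom_coloring V E c (chi_dom V E)"
proof -
  have "\<exists>c. dom_coloring V E c (card (id ` V))"
    by (rule dom_coloring_card_image) (use assms in \<open>auto simp: sgraph_def nbhd_def\<close>)
  then have "\<exists>k c. dom_coloring V E c k" by blast
  then show ?thesis unfolding chi_dom_def by (rule LeastI_ex)
qed

lemma finite_nbhd: "sgraph V E \<Longrightarrow> finite (nbhd E x)"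
  by (rule finite_subset[of _ V]) (auto simp: sgraph_def nbhd_def)

lemma sgraph_del_vertex: "sgraph V E \<Longrightarrow> sgraph (del_vertex_V V v) (del_vertex_E E v)"
  unfolding sgraph_def del_vertex_V_def del_vertex_E_def by auto

lemma connected_graph_ex_neighbour:
  assumes "sgraph V E" "connected_graph V E" "card V \<ge> 2" "u \<in> V"
  shows "\<exists>w\<in>V. E w u"
proof -
  have "\<not> V \<subseteq> {u}"
    using assms(3) card_mono[of "{u}" V] by auto
  then obtain w where w: "w \<in> V" "w \<noteq> u" by blast
  have "E\<^sup>*\<^sup>* u w" using assms(2,4) w unfolding connected_graph_def reach_def by blast
  then obtain z where "E u z" using w(2) by (metis converse_rtranclpE)
  then show ?thesis using assms(1) unfolding sgraph_def by blast
qed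

lemma connected_graph_del_non_cut_vertex:
  assumes "finite V" "connected_graph V E" "v \<in> V" "\<not> cut_vertex V E v"
    and "del_vertex_V V v \<noteq> {}"
  shows "connected_graph (del_vertex_V V v) (del_vertex_E E v)"
proof -
  define V' where "V' = del_vertex_V V v"
  define E' where "E' = del_vertex_E E v"
  have "components V E = {V}"
    using assms(2) unfolding components_def connected_graph_def by auto
  then have "card (components V' E') \<le> 1"
    using assms(3,4) unfolding cut_vertex_def V'_def E'_def by simp
  moreover have "finite (components V' E')"
  proof -
    have "components V' E' = (\<lambda>x. {y \<in> V'. reach E' x y}) ` V'"
      unfolding components_def by auto
    then show ?thesis using assms(1) by (simp add: V'_def del_vertex_V_def)
  qed
  ultimately have single: "A = B" if "A \<in> components V' E'" "B \<in> components V' E'" for A B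
    using that card_le_Suc0_iff_eq by (metis One_nat_def)
  have "reach E' x y" if "x \<in> V'" "y \<in> V'" for x y
  proof -
    have "{z \<in> V'. reach E' x z} = {z \<in> V'. reach E' y z}"
      by (rule single) (use that in \<open>auto simp: components_def\<close>)
    moreover have "reach E' y y" unfolding reach_def by simp
    ultimately show ?thesis using that by blast
  qed
  then show ?thesis
    using assms(5) unfolding connected_graph_def V'_def E'_def by blast
qed

lemma chi_dom_le_Suc_del_vertex:
  assumes "sgraph V E" "v \<in> V" "E w v"
    and "dom_coloring (del_vertex_V V v) (del_vertex_E E v) c' k'"
  shows "chi_dom V E \<le> Suc k'"
proof -
  let ?V' = "del_vertex_V V v"
  define d where "d u = (if u = v then k' else c' u)" for u
  have below: "c' u < k'" if "u \<in> V" "u \<noteq> v" for u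
    using assms(4) that unfolding dom_coloring_def del_vertex_V_def by blast
  then have fresh: "c' u \<noteq> k'" if "u \<in> V" "u \<noteq> v" for u
    using that by blast
  have "\<exists>c. dom_coloring V E c (card (d ` V))"
  proof (rule dom_coloring_card_image)
    show "finite V" using assms(1) unfolding sgraph_def by blast
    show "\<forall>x\<in>V. \<forall>y\<in>V. E x y \<longrightarrow> d x \<noteq> d y"
    proof (intro ballI impI)
      fix x y assume xy: "x \<in> V" "y \<in> V" "E x y"
      show "d x \<noteq> d y"
      proof (cases "x = v \<or> y = v")
        case True
        moreover have "x \<noteq> y" using xy assms(1) unfolding sgraph_def by blast
        ultimately show ?thesis
          using xy fresh by (auto simp: d_def)
      next
        case False
        then show ?thesis
          using xy assms(4) unfolding dom_coloring_def d_def del_vertex_V_def del_vertex_E_def by auto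
      qed
    qed
    show "\<forall>u\<in>V. \<exists>x\<in>V. {y \<in> V. d y = d u} \<subseteq> nbhd E x"
    proof
      fix u assume u: "u \<in> V"
      show "\<exists>x\<in>V. {y \<in> V. d y = d u} \<subseteq> nbhd E x"
      proof (cases "u = v")
        case True
        then have "{y \<in> V. d y = d u} \<subseteq> {v}"
          using fresh by (auto simp: d_def)
        moreover have "w \<in> V" using assms(1,3) unfolding sgraph_def by blast
        ultimately show ?thesis using assms(3) unfolding nbhd_def by blast
      next
        case False
        then have "u \<in> ?V'" using u by (simp add: del_vertex_V_def)
        then obtain x where x: "x \<in> ?V'" "{y \<in> ?V'. c' y = c' u} \<subseteq> nbhd (del_vertex_E E v) x"
          using assms(4) below[OF u False] unfolding dom_coloring_def by blast
        have "{y \<in> V. d y = d u} \<subseteq> {y \<in> ?V'. c' y = c' u}"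
          using False fresh[OF u False] by (auto simp: d_def del_vertex_V_def)
        also have "\<dots> \<subseteq> nbhd E x"
          using x(2) unfolding nbhd_def del_vertex_E_def by auto
        finally show ?thesis using x(1) by (auto simp: del_vertex_V_def)
      qed
    qed
  qed
  then have "chi_dom V E \<le> card (d ` V)" using chi_dom_le by blast
  also have "card (d ` V) \<le> card {..k'}"
  proof (rule card_mono)
    show "d ` V \<subseteq> {..k'}"
      using below by (force simp: d_def)
  qed simp
  finally show ?thesis by (simp only: card_atMost)
qed

lemma Suc_chi_dom_del_vertex_le:
  assumes "sgraph V E" "v \<in> V" "E w v"
    and no_isolated: "\<forall>u\<in>del_vertex_V V v. \<exists>x\<in>del_vertex_V V v. del_vertex_E E v x u"
    and c: "dom_coloring V E c k"
  shows "Suc (chi_dom (del_vertex_V V v) (del_vertex_E E v)) \<le> k + degree E v"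
proof -
  define V' where "V' = del_vertex_V V v"
  define E' where "E' = del_vertex_E E v"
  have V'_eq: "V' = V - {v}" and E'_iff: "\<And>x y. E' x y \<longleftrightarrow> E x y \<and> x \<noteq> v \<and> y \<noteq> v"
    unfolding V'_def E'_def del_vertex_V_def del_vertex_E_def by simp_all
  have colours: "c ` V = {..<k}" using c unfolding dom_coloring_def by blast
  define B where "B = {j. j < k \<and> \<not> (\<exists>x\<in>V'. {y\<in>V. c y = j} - {v} \<subseteq> nbhd E x)}"
  have B_nbhd: "E v y" if "c y \<in> B" "y \<in> V" for y
  proof -
    have "c y < k" using that unfolding B_def by blast
    then obtain x where x: "x \<in> V" "{y'\<in>V. c y' = c y} \<subseteq> nbhd E x"
      using c unfolding dom_coloring_def by blast
    have "x = v"
    proof (rule ccontr)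
      assume "x \<noteq> v"
      then have "x \<in> V'" using x(1) V'_eq by blast
      then show False using that(1) x(2) unfolding B_def by blast
    qed
    then show ?thesis using x(2) that(2) unfolding nbhd_def by blast
  qed
  define d where "d u = (if c u \<in> B then Inr u else Inl (c u))" for u
  have "\<exists>c'. dom_coloring V' E' c' (card (d ` V'))"
  proof (rule dom_coloring_card_image)
    show "finite V'" using assms(1) V'_eq unfolding sgraph_def by simp
    show "\<forall>x\<in>V'. \<forall>y\<in>V'. E' x y \<longrightarrow> d x \<noteq> d y"
    proof (intro ballI impI)
      fix x y assume xy: "x \<in> V'" "y \<in> V'" "E' x y"
      then have "c x \<noteq> c y" using c E'_iff V'_eq unfolding dom_coloring_def by auto
      moreover have "x \<noteq> y" using xy assms(1) E'_iff unfolding sgraph_def by auto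
      ultimately show "d x \<noteq> d y" unfolding d_def by auto
    qed
    show "\<forall>u\<in>V'. \<exists>x\<in>V'. {y \<in> V'. d y = d u} \<subseteq> nbhd E' x"
    proof
      fix u assume u: "u \<in> V'"
      show "\<exists>x\<in>V'. {y \<in> V'. d y = d u} \<subseteq> nbhd E' x"
      proof (cases "c u \<in> B")
        case True
        then have "{y \<in> V'. d y = d u} \<subseteq> {u}" unfolding d_def by (auto split: if_splits)
        moreover obtain x where "x \<in> V'" "E' x u"
          using no_isolated u unfolding V'_def E'_def by blast
        ultimately show ?thesis unfolding nbhd_def by blast
      next
        case False
        have "c u < k" using u V'_eq colours by auto
        then obtain x where x: "x \<in> V'" "{y\<in>V. c y = c u} - {v} \<subseteq> nbhd E x"
          using False unfolding B_def by blast
        have "{y \<in> V'. d y = d u} \<subseteq> {y\<in>V. c y = c u} - {v}"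
          using False V'_eq unfolding d_def by (auto split: if_splits)
        also have "\<dots> \<subseteq> nbhd E' x" using x E'_iff V'_eq unfolding nbhd_def by auto
        finally show ?thesis using x(1) by blast
      qed
    qed
  qed
  then have "chi_dom V' E' \<le> card (d ` V')" using chi_dom_le by blast
  moreover have "Suc (card (d ` V')) \<le> k + degree E v"
  proof (cases "B = {}")
    case True
    then have "d ` V' \<subseteq> Inl ` {..<k}" using V'_eq colours unfolding d_def by auto
    then have "card (d ` V') \<le> k"
      using card_mono[of "Inl ` {..<k}" "d ` V'"] by (simp add: card_image)
    moreover have "w \<in> nbhd E v" using assms(1,3) unfolding sgraph_def nbhd_def by blast
    then have "degree E v \<noteq> 0" using finite_nbhd[OF assms(1)] unfolding degree_def by auto
    ultimately show ?thesis by linarith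
  next
    case False
    have "B \<subseteq> {..<k}" unfolding B_def by auto
    then have "{..<k} - B \<subset> {..<k}" using False by blast
    then have "card ({..<k} - B) < k"
      using psubset_card_mono[of "{..<k}"] by simp
    have "d ` V' \<subseteq> Inl ` ({..<k} - B) \<union> Inr ` nbhd E v"
      using V'_eq colours B_nbhd unfolding d_def nbhd_def by auto
    then have "card (d ` V') \<le> card (Inl ` ({..<k} - B) \<union> Inr ` nbhd E v :: (nat + 'a) set)"
      using finite_nbhd[OF assms(1)] by (intro card_mono) auto
    also have "\<dots> \<le> card (Inl ` ({..<k} - B) :: (nat + 'a) set) + card (Inr ` nbhd E v :: (nat + 'a) set)"
      by (rule card_Un_le)
    also have "\<dots> = card ({..<k} - B) + degree E v"
      by (simp add: card_image degree_def)
    finally show ?thesis using \<open>card ({..<k} - B) < k\<close> by linarith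
  qed
  ultimately show ?thesis unfolding V'_def E'_def by linarith
qed

theorem theorem2p2:
  fixes V :: "'a set" and E :: "'a \<Rightarrow> 'a \<Rightarrow> bool" and v :: 'a
  assumes "sgraph V E"
    and "connected_graph V E"
    and "card V \<ge> 3"
    and "v \<in> V"
    and "\<not> cut_vertex V E v"
  shows "int (chi_dom V E) - 1 \<le> int (chi_dom (del_vertex_V V v) (del_vertex_E E v))
       \<and> int (chi_dom (del_vertex_V V v) (del_vertex_E E v)) \<le> int (chi_dom V E) + int (degree E v) - 1"
proof -
  let ?V' = "del_vertex_V V v" and ?E' = "del_vertex_E E v"
  have "finite V" using assms(1) unfolding sgraph_def by blast
  have "card ?V' \<ge> 2"
    using \<open>finite V\<close> assms(3,4) by (simp add: del_vertex_V_def)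
  then have "?V' \<noteq> {}" by auto
  have no_isolated: "\<forall>u\<in>V. \<exists>x\<in>V. E x u"
    using connected_graph_ex_neighbour[OF assms(1,2)] assms(3) by simp
  then obtain w where "E w v" using assms(4) by blast
  have "connected_graph ?V' ?E'"
    by (rule connected_graph_del_non_cut_vertex) (use \<open>finite V\<close> assms \<open>?V' \<noteq> {}\<close> in simp_all)
  then have no_isolated': "\<forall>u\<in>?V'. \<exists>x\<in>?V'. ?E' x u"
    using connected_graph_ex_neighbour[OF sgraph_del_vertex[OF assms(1)]] \<open>card ?V' \<ge> 2\<close> by blast
  obtain c where "dom_coloring V E c (chi_dom V E)"
    using dom_coloring_chi_dom[OF assms(1) no_isolated] by blast
  from Suc_chi_dom_del_vertex_le[OF assms(1,4) \<open>E w v\<close> no_isolated' this]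
  have "Suc (chi_dom ?V' ?E') \<le> chi_dom V E + degree E v" .
  moreover obtain c' where "dom_coloring ?V' ?E' c' (chi_dom ?V' ?E')"
    using dom_coloring_chi_dom[OF sgraph_del_vertex[OF assms(1)] no_isolated'] by blast
  from chi_dom_le_Suc_del_vertex[OF assms(1,4) \<open>E w v\<close> this]
  have "chi_dom V E \<le> Suc (chi_dom ?V' ?E')" .
  ultimately show ?thesis by linarith
qed

end
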